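(* Let the system have Hilbert-space dimension $d$. Let $\mathcal G$ be a set of unitary gates, containing the identity, that is universal (every unitary on the $d$-dimensional space is a limit of finite products of elements of $\mathcal G$), and let $C_{\mathcal G}(U)=\min\{r\in\mathbb N: U=U_r\cdots U_1,\ U_j\in\mathcal G\}$ (infinite if no such finite product exists). Let $\mathcal P$ be a set of projectors containing $\mathbb 1$ and at least one rank-1 projector, and let $\mathcal M^r=\{U^\dagger PU: P\in\mathcal P,\ C_{\mathcal G}(U)\le r\}$, $\mathcal M^\infty=\overline{\bigcup_{r\ge0}\mathcal M^r}$. Let $\mathcal X=\{\log\operatorname{tr}P: P\in\mathcal P\}\subseteq[0,\log d]$ and $q=\sup\{b-a: (a,b)\subseteq[0,\log d]\setminus\mathcal X\}$. Then $\mathcal M^\infty$ is $q$-quasiuniversal with respect to $\mathbb 1$.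
   Context: Natural logarithms; POVM effect = operator $0\le Q\le\mathbb 1$; $\overline{\,\cdot\,}$ is topological closure. A set $\mathcal M^\infty$ of POVM effects is $q$-quasiuniversal with respect to a positive semidefinite $\Gamma$ if for every POVM effect $Q$ with $\|Q\|_\infty=1$ and every $g\in(0,1)$ there exist $\tilde Q,\tilde Q'\in\mathcal M^\infty$ with $g\tilde Q\le Q\le(1-g)\tilde Q'+g\mathbb 1$ and $\log\operatorname{tr}(\tilde Q'\Gamma)-\log\operatorname{tr}(\tilde Q\Gamma)\le q$. *)

theory Defs
  imports "HOL-Analysis.Analysis" "HOL-Library.Extended_Nat"
begin

type_synonym 'n cmat = "complex^'n^'n"

definition cadj :: "'n::finite cmat \<Rightarrow> 'n cmat" where
  "cadj A = (\<chi> i j. cnj (A $ j $ i))"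

text \<open>Positive semidefinite: the sesquilinear form is real and nonnegative for every vector
(over the complex numbers this also forces A to be Hermitian).\<close>
definition psd :: "'n::finite cmat \<Rightarrow> bool" where
  "psd A \<longleftrightarrow> (\<forall>v::complex^'n.
      let z = (\<Sum>i\<in>UNIV. cnj (v $ i) * (A *v v) $ i) in Im z = 0 \<and> 0 \<le> Re z)"

definition loewner_le :: "'n::finite cmat \<Rightarrow> 'n cmat \<Rightarrow> bool" where
  "loewner_le A B \<longleftrightarrow> psd (B - A)"

definition op_norm :: "'n::finite cmat \<Rightarrow> real" where
  "op_norm A = onorm (\<lambda>v::complex^'n. A *v v)"

definition povm_effect :: "'n::finite cmat \<Rightarrow> bool" where
  "povm_effect Q \<longleftrightarrow> loewner_le 0 Q \<and> loewner_le Q (mat 1)"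

definition unitary_mat :: "'n::finite cmat \<Rightarrow> bool" where
  "unitary_mat U \<longleftrightarrow> U ** cadj U = mat 1 \<and> cadj U ** U = mat 1"

definition projector :: "'n::finite cmat \<Rightarrow> bool" where
  "projector P \<longleftrightarrow> P ** P = P \<and> cadj P = P"

text \<open>Product U_r ... U_1 of a list [U_1, ..., U_r] of gates (empty product = identity).\<close>
definition circuit_prod :: "'n::finite cmat list \<Rightarrow> 'n cmat" where
  "circuit_prod Us = foldl (\<lambda>A U. U ** A) (mat 1) Us"

definition universal_gate_set :: "'n::finite cmat set \<Rightarrow> bool" where
  "universal_gate_set G \<longleftrightarrow> (\<forall>U. unitary_mat U \<longrightarrow>
      U \<in> closure {circuit_prod Us | Us. set Us \<subseteq> G})"

definition circuit_complexity :: "'n::finite cmat set \<Rightarrow> 'n cmat \<Rightarrow> enat" where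
  "circuit_complexity G U =
     (if \<exists>Us. set Us \<subseteq> G \<and> circuit_prod Us = U
      then enat (LEAST r. \<exists>Us. length Us = r \<and> set Us \<subseteq> G \<and> circuit_prod Us = U)
      else \<infinity>)"

definition M_r :: "'n::finite cmat set \<Rightarrow> 'n cmat set \<Rightarrow> nat \<Rightarrow> 'n cmat set" where
  "M_r G PP r = {cadj U ** P ** U | U P. P \<in> PP \<and> circuit_complexity G U \<le> enat r}"

definition M_infty :: "'n::finite cmat set \<Rightarrow> 'n cmat set \<Rightarrow> 'n cmat set" where
  "M_infty G PP = closure (\<Union>r. M_r G PP r)"

text \<open>q-quasiuniversality w.r.t. Gamma. The paper's log of a vanishing trace is -infinity;
 the positivity conditions on the traces encode that (Isabelle's ln 0 = 0).\<close>
definition quasiuniversal :: "'n::finite cmat set \<Rightarrow> real \<Rightarrow> 'n cmat \<Rightarrow> bool" where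
  "quasiuniversal M q \<Gamma> \<longleftrightarrow>
     (\<forall>Q g. povm_effect Q \<and> op_norm Q = 1 \<and> 0 < g \<and> g < 1 \<longrightarrow>
        (\<exists>Qt Qt'. Qt \<in> M \<and> Qt' \<in> M \<and>
           loewner_le (g *\<^sub>R Qt) Q \<and>
           loewner_le Q ((1 - g) *\<^sub>R Qt' + g *\<^sub>R mat 1) \<and>
           0 < Re (trace (Qt ** \<Gamma>)) \<and> 0 < Re (trace (Qt' ** \<Gamma>)) \<and>
           ln (Re (trace (Qt' ** \<Gamma>))) - ln (Re (trace (Qt ** \<Gamma>))) \<le> q))"

end

theory Submission
  imports Defs
begin

text \<open>Diagonalize the effect as Q = V diag(\<lambda>) V\<dagger> with 0 \<le> \<lambda>j \<le> 1 and let K be the set of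
  indices with \<lambda>j > g; it is nonempty because Q has operator norm 1. The traces of the projectors
  in P are natural numbers including 1 (the rank-1 projector) and d (the identity), so there are
  traces t1 \<le> |K| \<le> t2 with no trace strictly in between. A projector of trace t is unitarily
  equivalent to the coordinate projector onto any t-element index set; choosing S1 \<subseteq> K \<subseteq> S2 of
  sizes t1, t2 and conjugating with V gives projectors Q1, Q2 diagonal in the eigenbasis of Q,
  so g Q1 \<le> Q \<le> (1 - g) Q2 + g 1 can be checked eigenvalue by eigenvalue. Both lie in the
  closure of the circuit-generated effects because, by universality, every unitary conjugate of an
  element of P is a limit of circuit conjugates. Finally (ln t1, ln t2) avoids all ln-traces, so
  ln t2 - ln t1 \<le> q.\<close>

section \<open>Complex inner product, adjoints and unitaries\<close>

definition cinner :: "complex^'n::finite \<Rightarrow> complex^'n \<Rightarrow> complex" where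
  "cinner u v = (\<Sum>i\<in>UNIV. cnj (u $ i) * v $ i)"

lemma psd_iff_cinner:
  "psd A \<longleftrightarrow> (\<forall>v. Im (cinner v (A *v v)) = 0 \<and> 0 \<le> Re (cinner v (A *v v)))"
  by (simp add: psd_def cinner_def Let_def)

lemma cinner_add_left: "cinner (x + y) z = cinner x z + cinner y z"
  by (simp add: cinner_def sum.distrib distrib_right)

lemma cinner_add_right: "cinner z (x + y) = cinner z x + cinner z y"
  by (simp add: cinner_def sum.distrib distrib_left)

lemma cinner_diff_right: "cinner z (x - y) = cinner z x - cinner z y"
  by (simp add: cinner_def sum_subtractf right_diff_distrib)

lemma cinner_scale_left: "cinner (c *s x) z = cnj c * cinner x z"
  by (simp add: cinner_def sum_distrib_left mult.assoc)

lemma cinner_scale_right: "cinner z (c *s x) = c * cinner z x"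
  by (simp add: cinner_def sum_distrib_left mult.left_commute)

lemma cinner_scaleR_right: "cinner z (c *\<^sub>R x) = of_real c * cinner z x"
  by (simp add: cinner_def sum_distrib_left) (simp add: scaleR_conv_of_real mult.left_commute)

lemma cinner_sum_right: "cinner z (\<Sum>e\<in>S. f e) = (\<Sum>e\<in>S. cinner z (f e))"
  by (simp add: cinner_def sum_distrib_left sum_component) (rule sum.swap)

lemma cinner_zero_right [simp]: "cinner z 0 = 0"
  by (simp add: cinner_def)

lemma cinner_commute: "cinner u v = cnj (cinner v u)"
  by (simp add: cinner_def mult.commute)

lemma inner_eq_Re_cinner: "inner x y = Re (cinner x y)"
  by (simp add: inner_vec_def cinner_def Re_sum inner_complex_def)

lemma cinner_self: "cinner x x = complex_of_real ((norm x)\<^sup>2)"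
proof -
  have "(norm x)\<^sup>2 = (\<Sum>i\<in>UNIV. (cmod (x $ i))\<^sup>2)"
    unfolding norm_vec_def L2_set_def by (simp add: sum_nonneg)
  moreover have "cinner x x = (\<Sum>i\<in>UNIV. complex_of_real ((cmod (x $ i))\<^sup>2))"
    unfolding cinner_def by (intro sum.cong refl) (subst complex_norm_square, simp)
  ultimately show ?thesis by (metis of_real_sum)
qed

lemma cinner_axis_mult_axis: "cinner (axis a 1) ((A::'n::finite cmat) *v axis b 1) = A $ a $ b"
proof -
  have column: "(A *v axis b 1) $ i = A $ i $ b" for i
  proof -
    have "\<And>j. A $ i $ j * (axis b 1 :: complex^'n) $ j = (if j = b then A $ i $ b else 0)"
      by (simp add: axis_def)
    then show ?thesis by (simp add: matrix_vector_mult_def)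
  qed
  have "\<And>i. cnj ((axis a 1 :: complex^'n) $ i) * (A *v axis b 1) $ i = (if i = a then A $ a $ b else 0)"
    by (simp only: column) (simp add: axis_def)
  then show ?thesis unfolding cinner_def by simp
qed

lemma matrix_vector_mult_add: "A *v (x + y) = A *v x + A *v (y :: complex^'n::finite)"
  by (simp add: matrix_vector_mult_def vec_eq_iff sum.distrib distrib_left)

lemma matrix_vector_mult_scale: "A *v (c *s x) = c *s (A *v (x :: complex^'n::finite))"
  by (simp add: matrix_vector_mult_def vec_eq_iff sum_distrib_left mult.left_commute)

lemma matrix_vector_mult_scaleR: "A *v (c *\<^sub>R x) = c *\<^sub>R (A *v (x :: complex^'n::finite))"
  by (simp add: matrix_vector_mult_def vec_eq_iff scaleR_sum_right)

lemma scaleR_eq_vector_scale: "(m::real) *\<^sub>R (e::complex^'n) = complex_of_real m *s e"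
  by (simp add: vec_eq_iff) (simp add: scaleR_conv_of_real)

lemma cinner_cadj:
  fixes A :: "'n::finite cmat"
  shows "cinner u (A *v v) = cinner (cadj A *v u) v"
proof -
  have "cinner u (A *v v) = (\<Sum>i\<in>UNIV. \<Sum>k\<in>UNIV. cnj (u $ i) * A $ i $ k * v $ k)"
    unfolding cinner_def matrix_vector_mult_def by (simp add: sum_distrib_left mult.assoc)
  also have "\<dots> = (\<Sum>k\<in>UNIV. \<Sum>i\<in>UNIV. cnj (u $ i) * A $ i $ k * v $ k)"
    by (rule sum.swap)
  also have "\<dots> = cinner (cadj A *v u) v"
    unfolding cinner_def matrix_vector_mult_def cadj_def
    by (simp add: sum_distrib_left sum_distrib_right mult.commute mult.left_commute)
  finally show ?thesis .
qed

lemma cadj_cadj [simp]: "cadj (cadj A) = A"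
  by (simp add: cadj_def vec_eq_iff)

lemma cadj_matrix_mult: "cadj (A ** B) = cadj B ** cadj A"
  by (simp add: cadj_def vec_eq_iff matrix_matrix_mult_def mult.commute)

lemma hermitian_inner_commute: "cadj A = A \<Longrightarrow> inner x (A *v y) = inner (A *v x) y"
  by (metis cinner_cadj inner_eq_Re_cinner)

lemma psd_imp_hermitian:
  assumes "psd (A::'n::finite cmat)"
  shows "cadj A = A"
proof -
  let ?f = "\<lambda>v. cinner v (A *v v)"
  have real: "Im (?f v) = 0" for v
    using assms by (simp add: psd_iff_cinner)
  have expand: "?f (axis a 1 + c *s axis b 1) = A$a$a + c * A$a$b + cnj c * A$b$a + cnj c * c * A$b$b"
    for a b c
    by (simp add: matrix_vector_mult_add matrix_vector_mult_scale cinner_add_left cinner_add_right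
        cinner_scale_left cinner_scale_right cinner_axis_mult_axis algebra_simps)
  have "cadj A $ a $ b = A $ a $ b" for a b
  proof -
    have "Im (A$a$a) = 0" "Im (A$b$b) = 0"
      using real[of "axis a 1"] real[of "axis b 1"] by (simp_all add: cinner_axis_mult_axis)
    moreover have "Im (A$a$a + A$a$b + A$b$a + A$b$b) = 0"
      using real[of "axis a 1 + 1 *s axis b 1"] unfolding expand by simp
    moreover have "Im (A$a$a + \<i> * A$a$b + cnj \<i> * A$b$a + cnj \<i> * \<i> * A$b$b) = 0"
      using real[of "axis a 1 + \<i> *s axis b 1"] unfolding expand .
    ultimately show ?thesis by (simp add: cadj_def complex_eq_iff)
  qed
  then show ?thesis by (simp add: vec_eq_iff)
qed

lemma unitary_mat_matrix_mult: "unitary_mat U \<Longrightarrow> unitary_mat V \<Longrightarrow> unitary_mat (U ** V)"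
  unfolding unitary_mat_def cadj_matrix_mult
  by (metis matrix_mul_assoc matrix_mul_lid matrix_mul_rid)

lemma unitary_mat_cadj: "unitary_mat U \<Longrightarrow> unitary_mat (cadj U)"
  by (simp add: unitary_mat_def)

lemma unitary_matI: "cadj U ** U = mat 1 \<Longrightarrow> unitary_mat U"
  by (simp add: unitary_mat_def matrix_left_right_inverse)

lemma cinner_unitary_mult: "unitary_mat V \<Longrightarrow> cinner (V *v x) (V *v y) = cinner x y"
  by (simp add: cinner_cadj matrix_vector_mul_assoc unitary_mat_def)

lemma norm_unitary_mult: "unitary_mat V \<Longrightarrow> norm (V *v x) = norm x"
proof -
  assume "unitary_mat V"
  then have "(norm (V *v x))\<^sup>2 = (norm x)\<^sup>2"
    using cinner_unitary_mult[of V x x] by (simp add: cinner_self flip: of_real_power)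
  then show ?thesis by (simp add: power2_eq_iff_nonneg)
qed

section \<open>Unitarily diagonal matrices\<close>

definition diag_mat :: "('n::finite \<Rightarrow> real) \<Rightarrow> 'n cmat" where
  "diag_mat r = (\<chi> i j. if i = j then complex_of_real (r i) else 0)"

abbreviation diag_conj :: "'n::finite cmat \<Rightarrow> ('n \<Rightarrow> real) \<Rightarrow> 'n cmat" where
  "diag_conj V r \<equiv> V ** diag_mat r ** cadj V"

lemma diag_mat_mult_vec: "diag_mat r *v w = (\<chi> j. complex_of_real (r j) * w $ j)"
proof -
  have "\<And>i. (\<Sum>j\<in>UNIV. (if i = j then complex_of_real (r i) else 0) * w $ j) = complex_of_real (r i) * w $ i"
    by (simp add: if_distrib[of "\<lambda>x. x * _"] cong: if_cong)
  then show ?thesis by (simp add: diag_mat_def matrix_vector_mult_def vec_eq_iff)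
qed

lemma diag_conj_mult_unitary_vec:
  "unitary_mat V \<Longrightarrow> diag_conj V r *v (V *v w) = V *v (diag_mat r *v w)"
  by (metis matrix_mul_assoc matrix_mul_rid matrix_vector_mul_assoc unitary_mat_def)

lemma cinner_diag_conj:
  assumes "unitary_mat V"
  shows "cinner (V *v w) (diag_conj V r *v (V *v w)) = complex_of_real (\<Sum>j\<in>UNIV. r j * (cmod (w $ j))\<^sup>2)"
proof -
  have "cinner (V *v w) (diag_conj V r *v (V *v w)) = cinner w (diag_mat r *v w)"
    using assms by (simp add: diag_conj_mult_unitary_vec cinner_unitary_mult)
  also have "\<dots> = (\<Sum>j\<in>UNIV. complex_of_real (r j * (cmod (w $ j))\<^sup>2))"
    unfolding cinner_def diag_mat_mult_vec
    by (intro sum.cong refl) (simp add: complex_norm_square[symmetric] mult.commute)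
  finally show ?thesis by simp
qed

lemma psd_diag_conj_iff:
  fixes V :: "'n::finite cmat"
  assumes "unitary_mat V"
  shows "psd (diag_conj V r) \<longleftrightarrow> (\<forall>j. 0 \<le> r j)"
proof
  assume psd: "psd (diag_conj V r)"
  show "\<forall>j. 0 \<le> r j"
  proof
    fix j
    have "(\<Sum>i\<in>UNIV. r i * (cmod ((axis j 1 :: complex^'n) $ i))\<^sup>2) = (\<Sum>i\<in>UNIV. if i = j then r j else 0)"
      by (intro sum.cong refl) (simp add: axis_def)
    then show "0 \<le> r j"
      using psd cinner_diag_conj[OF assms, of "axis j 1" r]
      by (simp add: psd_iff_cinner) (metis Re_complex_of_real)
  qed
next
  assume nonneg: "\<forall>j. 0 \<le> r j"
  show "psd (diag_conj V r)"
    unfolding psd_iff_cinner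
  proof
    fix v :: "complex^'n"
    have "v = V *v (cadj V *v v)"
      using assms by (simp add: matrix_vector_mul_assoc unitary_mat_def)
    then have "cinner v (diag_conj V r *v v) = complex_of_real (\<Sum>j\<in>UNIV. r j * (cmod ((cadj V *v v) $ j))\<^sup>2)"
      using cinner_diag_conj[OF assms, of "cadj V *v v" r] by simp
    moreover have "0 \<le> (\<Sum>j\<in>UNIV. r j * (cmod ((cadj V *v v) $ j))\<^sup>2)"
      using nonneg by (intro sum_nonneg mult_nonneg_nonneg) auto
    ultimately show "Im (cinner v (diag_conj V r *v v)) = 0 \<and> 0 \<le> Re (cinner v (diag_conj V r *v v))"
      by simp
  qed
qed

lemma diag_conj_entry:
  "diag_conj V r $ i $ k = (\<Sum>j\<in>UNIV. V $ i $ j * complex_of_real (r j) * cnj (V $ k $ j))"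
  by (simp add: matrix_matrix_mult_def diag_mat_def cadj_def if_distrib sum_distrib_right cong: if_cong)

lemma diag_conj_add: "diag_conj V r + diag_conj V s = diag_conj V (\<lambda>j. r j + s j)"
  by (simp add: vec_eq_iff diag_conj_entry sum.distrib[symmetric] distrib_left distrib_right)

lemma diag_conj_diff: "diag_conj V r - diag_conj V s = diag_conj V (\<lambda>j. r j - s j)"
  by (simp add: vec_eq_iff diag_conj_entry sum_subtractf[symmetric] right_diff_distrib left_diff_distrib)

lemma scaleR_diag_conj: "c *\<^sub>R diag_conj V r = diag_conj V (\<lambda>j. c * r j)"
  by (simp add: vec_eq_iff diag_conj_entry scaleR_sum_right)
    (simp add: scaleR_conv_of_real mult.assoc mult.left_commute)

lemma diag_conj_one: "unitary_mat V \<Longrightarrow> diag_conj V (\<lambda>_. 1) = mat 1"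
proof -
  have "diag_mat (\<lambda>_. 1) = (mat 1 :: 'n::finite cmat)"
    by (simp add: diag_mat_def mat_def vec_eq_iff)
  then show "unitary_mat V \<Longrightarrow> diag_conj V (\<lambda>_. 1) = mat 1"
    by (metis matrix_mul_rid unitary_mat_def)
qed

lemma diag_conj_mult:
  "unitary_mat V \<Longrightarrow> diag_conj V r ** diag_conj V s = diag_conj V (\<lambda>j. r j * s j)"
proof -
  assume unitary: "unitary_mat V"
  have "diag_mat r ** diag_mat s = diag_mat (\<lambda>j. r j * s j)"
  proof -
    have "\<And>i j k. diag_mat r $ i $ k * diag_mat s $ k $ j
        = (if k = i then (if i = j then complex_of_real (r i * s i) else 0) else 0)"
      by (simp add: diag_mat_def)
    then show ?thesis by (simp add: vec_eq_iff matrix_matrix_mult_def) (simp add: diag_mat_def)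
  qed
  moreover have "diag_conj V r ** diag_conj V s = V ** (diag_mat r ** (cadj V ** V) ** diag_mat s) ** cadj V"
    by (simp add: matrix_mul_assoc)
  ultimately show ?thesis
    using unitary by (simp add: unitary_mat_def)
qed

lemma diag_conj_inject:
  assumes "unitary_mat V" "diag_conj V r = diag_conj V s"
  shows "r = s"
proof -
  have "cadj V ** diag_conj V r ** V = diag_mat r" for r
  proof -
    have "cadj V ** diag_conj V r ** V = (cadj V ** V) ** diag_mat r ** (cadj V ** V)"
      by (simp add: matrix_mul_assoc)
    then show ?thesis using assms(1) by (simp add: unitary_mat_def)
  qed
  then have "diag_mat r $ j $ j = diag_mat s $ j $ j" for j
    using assms(2) by metis
  then show "r = s" by (simp add: diag_mat_def fun_eq_iff)
qed

lemma trace_diag_conj: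
  "unitary_mat V \<Longrightarrow> trace (diag_conj V r) = complex_of_real (\<Sum>j\<in>UNIV. r j)"
proof -
  assume unitary: "unitary_mat V"
  have "trace (diag_conj V r) = trace (diag_mat r ** cadj V ** V)"
    by (metis matrix_mul_assoc trace_mul_sym)
  also have "\<dots> = trace (diag_mat r)"
    using unitary by (simp add: unitary_mat_def flip: matrix_mul_assoc)
  finally show ?thesis by (simp add: trace_def diag_mat_def)
qed

lemma loewner_le_diag_conj:
  assumes "unitary_mat V" "\<And>j. r j \<le> s j"
  shows "loewner_le (diag_conj V r) (diag_conj V s)"
  using assms by (simp add: loewner_le_def diag_conj_diff psd_diag_conj_iff)

lemma cadj_mult_diag_conj_mult:
  assumes "unitary_mat W" "unitary_mat V"
  shows "cadj (W ** cadj V) ** diag_conj W r ** (W ** cadj V) = diag_conj V r"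
proof -
  have "cadj (W ** cadj V) ** diag_conj W r ** (W ** cadj V)
      = V ** (cadj W ** W) ** diag_mat r ** (cadj W ** W) ** cadj V"
    by (simp add: cadj_matrix_mult matrix_mul_assoc)
  then show ?thesis using assms by (simp add: unitary_mat_def)
qed

lemma diag_conj_permute:
  fixes W :: "'n::finite cmat"
  assumes "unitary_mat W" and "bij s"
  shows "\<exists>W'. unitary_mat W' \<and> diag_conj W r = diag_conj W' (r \<circ> s)"
proof -
  define W' :: "'n cmat" where "W' = (\<chi> i j. W $ i $ s j)"
  have "cadj W' ** W' = mat 1"
  proof -
    have "(\<Sum>i\<in>UNIV. cnj (W $ i $ s a) * W $ i $ s c) = (cadj W ** W) $ s a $ s c" for a c
      by (simp add: matrix_matrix_mult_def cadj_def)
    moreover have "s a = s c \<longleftrightarrow> a = c" for a c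
      using assms(2) by (auto simp: bij_def inj_eq)
    ultimately show ?thesis
      using assms(1) by (simp add: vec_eq_iff matrix_matrix_mult_def cadj_def W'_def mat_def unitary_mat_def)
  qed
  moreover have "diag_conj W' (r \<circ> s) $ i $ k = diag_conj W r $ i $ k" for i k
  proof -
    have "diag_conj W' (r \<circ> s) $ i $ k
        = (\<Sum>j\<in>UNIV. (\<lambda>j. W $ i $ j * complex_of_real (r j) * cnj (W $ k $ j)) (s j))"
      by (simp add: diag_conj_entry W'_def)
    also have "\<dots> = (\<Sum>j\<in>UNIV. W $ i $ j * complex_of_real (r j) * cnj (W $ k $ j))"
      using assms(2) by (intro sum.reindex_bij_betw) (simp add: bij_def bij_betw_def)
    finally show ?thesis by (simp add: diag_conj_entry)
  qed
  ultimately show ?thesis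
    by (metis unitary_matI vec_eq_iff)
qed

lemma op_norm_diag_conj_le:
  assumes unitary: "unitary_mat V" and bound: "\<And>j. \<bar>r j\<bar> \<le> c"
  shows "op_norm (diag_conj V r) \<le> c"
  unfolding op_norm_def
proof (rule onorm_le)
  fix x :: "complex^'a"
  define w where "w = cadj V *v x"
  have x: "x = V *v w"
    using unitary by (simp add: w_def matrix_vector_mul_assoc unitary_mat_def)
  have "0 \<le> c" using bound by (meson abs_ge_zero order_trans)
  have "norm (diag_conj V r *v x) = norm (diag_mat r *v w)"
    by (simp add: x diag_conj_mult_unitary_vec[OF unitary] norm_unitary_mult[OF unitary])
  also have "\<dots> \<le> norm (c *\<^sub>R w)"
  proof (rule norm_le_componentwise_cart)
    fix j
    have "norm ((diag_mat r *v w) $ j) = \<bar>r j\<bar> * norm (w $ j)"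
      by (simp add: diag_mat_mult_vec norm_mult)
    also have "\<dots> \<le> norm ((c *\<^sub>R w) $ j)"
      using bound \<open>0 \<le> c\<close> by (simp add: mult_right_mono)
    finally show "norm ((diag_mat r *v w) $ j) \<le> norm ((c *\<^sub>R w) $ j)" .
  qed
  also have "\<dots> = c * norm x"
    using \<open>0 \<le> c\<close> unitary by (simp add: w_def norm_unitary_mult unitary_mat_cadj)
  finally show "norm (diag_conj V r *v x) \<le> c * norm x" .
qed

section \<open>Spectral theorem for Hermitian matrices\<close>

lemma linear_coeff_eq_0_if_quadratic_nonpos:
  fixes a b :: real
  assumes nonpos: "\<And>t. a * t + b * t\<^sup>2 \<le> 0" and "0 \<le> a"
  shows "a = 0"
proof (rule ccontr)
  assume "a \<noteq> 0"
  with \<open>0 \<le> a\<close> have "0 < a" by simp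
  define t where "t = a / (2 * (\<bar>b\<bar> + 1))"
  have "0 < t" using \<open>0 < a\<close> by (simp add: t_def)
  have "\<bar>b\<bar> * t = a * (\<bar>b\<bar> / (2 * (\<bar>b\<bar> + 1)))" by (simp add: t_def)
  also have "\<dots> < a * 1"
    using \<open>0 < a\<close> by (intro mult_strict_left_mono) (simp_all add: field_simps)
  finally have "0 < t * (a - \<bar>b\<bar> * t)" using \<open>0 < t\<close> by simp
  moreover have "- \<bar>b\<bar> * t\<^sup>2 \<le> b * t\<^sup>2" by (intro mult_right_mono) auto
  ultimately have "0 < a * t + b * t\<^sup>2" by (simp add: power2_eq_square algebra_simps)
  then show False using nonpos[of t] by linarith
qed

text \<open>The Rayleigh quotient of a Hermitian matrix, restricted to an invariant subspace, is
  maximal only at eigenvectors: perturbing the maximizer u in the direction z = Au - mu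
  changes the quotient to first order by 2 t |z|^2.\<close>
lemma rayleigh_maximizer_is_eigenvector:
  fixes A :: "'n::finite cmat"
  assumes herm: "cadj A = A" and S: "subspace S" "\<And>x. x \<in> S \<Longrightarrow> A *v x \<in> S"
    and u: "u \<in> S" "norm u = 1"
    and max: "\<And>v. v \<in> S \<Longrightarrow> inner v (A *v v) \<le> inner u (A *v u) * inner v v"
  shows "A *v u = inner u (A *v u) *\<^sub>R u"
proof -
  define m where "m = inner u (A *v u)"
  define z where "z = A *v u - m *\<^sub>R u"
  have "z \<in> S" unfolding z_def using S u by (intro subspace_diff subspace_scale) auto
  have uu: "inner u u = 1" using u(2) by (simp add: power2_norm_eq_inner[symmetric])
  have Au: "A *v u = z + m *\<^sub>R u" by (simp add: z_def)
  have "inner z u = inner (A *v u) u - m * inner u u" by (simp add: z_def inner_diff_left)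
  then have zu: "inner z u = 0" by (simp add: uu m_def inner_commute)
  have symm: "inner u (A *v z) = inner z (A *v u)"
    using hermitian_inner_commute[OF herm] by (metis inner_commute)
  have "2 * inner z z * t + (inner z (A *v z) - m * inner z z) * t\<^sup>2 \<le> 0" for t
  proof -
    have "inner (u + t *\<^sub>R z) (A *v (u + t *\<^sub>R z)) \<le> m * inner (u + t *\<^sub>R z) (u + t *\<^sub>R z)"
      unfolding m_def using S u \<open>z \<in> S\<close> by (intro max subspace_add subspace_scale) auto
    then show ?thesis
      by (simp add: matrix_vector_mult_add matrix_vector_mult_scaleR inner_add_left inner_add_right
          symm Au uu zu inner_commute[of u z] power2_eq_square m_def[symmetric] algebra_simps)
  qed
  then have "2 * inner z z = 0"
    by (intro linear_coeff_eq_0_if_quadratic_nonpos[of _ "inner z (A *v z) - m * inner z z"])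
      (simp_all add: mult.commute)
  then show ?thesis by (simp add: z_def m_def)
qed

lemma hermitian_eigenvector_in_invariant_subspace:
  fixes A :: "'n::finite cmat"
  assumes herm: "cadj A = A" and S: "subspace S" "\<And>x. x \<in> S \<Longrightarrow> A *v x \<in> S"
    and "w \<in> S" "w \<noteq> 0"
  shows "\<exists>u\<in>S. norm u = 1 \<and> (\<exists>m::real. A *v u = m *\<^sub>R u)"
proof -
  define f where "f v = inner v (A *v v)" for v :: "complex^'n"
  define K where "K = sphere 0 1 \<inter> S"
  have "compact K"
    unfolding K_def by (intro compact_Int_closed compact_sphere closed_subspace S)
  moreover have "(1 / norm w) *\<^sub>R w \<in> K"
    using assms(4,5) S(1) by (simp add: K_def subspace_scale)
  moreover have "continuous_on K f"
    unfolding f_def matrix_vector_mult_def inner_vec_def by (intro continuous_intros)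
  ultimately obtain u where "u \<in> K" and umax: "\<And>v. v \<in> K \<Longrightarrow> f v \<le> f u"
    using continuous_attains_sup[of K f] by blast
  then have u: "u \<in> S" "norm u = 1" by (auto simp: K_def)
  have "f v \<le> f u * inner v v" if "v \<in> S" for v
  proof (cases "v = 0")
    case False
    then have "f ((1 / norm v) *\<^sub>R v) \<le> f u"
      using that S(1) by (intro umax) (simp add: K_def subspace_scale)
    then have "f v / (norm v)\<^sup>2 \<le> f u"
      by (simp add: f_def matrix_vector_mult_scaleR power2_eq_square)
    then show ?thesis
      using False by (simp add: divide_le_eq power2_norm_eq_inner mult.commute)
  qed (simp add: f_def)
  then show ?thesis
    using rayleigh_maximizer_is_eigenvector[OF herm S u] u unfolding f_def by blast
qed

definition corthonormal :: "(complex^'n::finite) set \<Rightarrow> bool" where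
  "corthonormal E \<longleftrightarrow> (\<forall>e\<in>E. cinner e e = 1) \<and> (\<forall>e\<in>E. \<forall>e'\<in>E. e \<noteq> e' \<longrightarrow> cinner e e' = 0)"

lemma corthonormal_complete_card:
  fixes E :: "(complex^'n::finite) set"
  assumes "finite E" "corthonormal E" and complete: "\<And>w. \<forall>e\<in>E. cinner e w = 0 \<Longrightarrow> w = 0"
  shows "card E = CARD('n)"
proof -
  have expand: "x = (\<Sum>e\<in>E. cinner e x *s e)" for x
  proof -
    have "cinner e' (x - (\<Sum>e\<in>E. cinner e x *s e)) = 0" if "e' \<in> E" for e'
    proof -
      have "(\<Sum>e\<in>E. cinner e x * cinner e' e) = (\<Sum>e\<in>E. if e = e' then cinner e' x else 0)"
        using assms(2) that by (intro sum.cong) (auto simp: corthonormal_def)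
      then show ?thesis
        using assms(1) that by (simp add: cinner_diff_right cinner_sum_right cinner_scale_right)
    qed
    then show ?thesis using complete by force
  qed
  have "(\<Sum>e\<in>E. cnj (e $ j) * e $ j) = 1" for j
  proof -
    have "(1::complex) = (axis j 1 :: complex^'n) $ j" by (simp add: axis_def)
    also have "\<dots> = (\<Sum>e\<in>E. cinner e (axis j 1) *s e) $ j" using expand by metis
    finally show ?thesis
      by (simp add: sum_component cinner_def axis_def if_distrib cong: if_cong)
  qed
  then have "of_nat CARD('n) = (\<Sum>j\<in>UNIV. \<Sum>e\<in>E. cnj (e $ j) * e $ j :: complex)"
    by simp
  also have "\<dots> = (\<Sum>e\<in>E. cinner e e)" unfolding cinner_def by (rule sum.swap)
  also have "\<dots> = of_nat (card E)" using assms(2) by (simp add: corthonormal_def)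
  finally show ?thesis by (metis of_nat_eq_iff)
qed

lemma unitary_mat_of_corthonormal_columns:
  fixes b :: "'n::finite \<Rightarrow> complex^'n"
  assumes "bij_betw b UNIV E" "corthonormal E"
  shows "unitary_mat (\<chi> i j. b j $ i)"
proof (rule unitary_matI)
  have "(\<Sum>i\<in>UNIV. cnj (b a $ i) * b c $ i) = (if a = c then 1 else 0)" for a c
  proof -
    have "b a \<noteq> b c" if "a \<noteq> c"
      using assms(1) that by (auto simp: bij_betw_def inj_on_def)
    then show ?thesis
      using assms unfolding bij_betw_def corthonormal_def cinner_def[symmetric] by auto
  qed
  then show "cadj (\<chi> i j. b j $ i) ** (\<chi> i j. b j $ i) = mat 1"
    by (simp add: vec_eq_iff matrix_matrix_mult_def cadj_def mat_def)
qed

text \<open>A maximal orthonormal family of eigenvectors is complete: its orthogonal complement is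
  invariant under A, so otherwise it would contain a further eigenvector.\<close>
lemma hermitian_complete_eigenvectors:
  fixes A :: "'n::finite cmat"
  assumes herm: "cadj A = A"
  obtains E where "finite E" "corthonormal E" "\<And>e. e \<in> E \<Longrightarrow> \<exists>m::real. A *v e = m *\<^sub>R e"
    "\<And>w. \<forall>e\<in>E. cinner e w = 0 \<Longrightarrow> w = 0"
proof -
  define eigenbasis where "eigenbasis E \<longleftrightarrow> finite E \<and> corthonormal E \<and> (\<forall>e\<in>E. \<exists>m::real. A *v e = m *\<^sub>R e)"
    for E :: "(complex^'n) set"
  have "card E \<le> DIM(complex^'n)" if "eigenbasis E" for E
  proof -
    have "pairwise orthogonal E" "0 \<notin> E"
      using that by (auto simp: eigenbasis_def corthonormal_def pairwise_def orthogonal_def inner_eq_Re_cinner cinner_self)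
    then show ?thesis by (metis independent_bound pairwise_orthogonal_independent)
  qed
  moreover have "eigenbasis {}" by (simp add: eigenbasis_def corthonormal_def)
  ultimately obtain E where E: "eigenbasis E" and maximal: "\<And>E'. eigenbasis E' \<Longrightarrow> card E' \<le> card E"
    using ex_has_greatest_nat[of eigenbasis "{}" card "DIM(complex^'n) + 1"] by fastforce
  have "w = 0" if orth: "\<forall>e\<in>E. cinner e w = 0" for w
  proof (rule ccontr)
    assume "w \<noteq> 0"
    define S where "S = {v. \<forall>e\<in>E. cinner e v = 0}"
    have "subspace S"
      by (auto simp: S_def subspace_def cinner_add_right cinner_scaleR_right)
    moreover have "A *v x \<in> S" if "x \<in> S" for x
    proof -
      have "cinner e (A *v x) = 0" if "e \<in> E" for e
      proof -
        obtain m :: real where "A *v e = m *\<^sub>R e" using E \<open>e \<in> E\<close> by (auto simp: eigenbasis_def)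
        then show ?thesis
          using \<open>x \<in> S\<close> \<open>e \<in> E\<close> herm
          by (simp add: cinner_cadj[of e A] S_def scaleR_eq_vector_scale cinner_scale_left)
      qed
      then show ?thesis by (simp add: S_def)
    qed
    ultimately obtain u where u: "u \<in> S" "norm u = 1" "\<exists>m::real. A *v u = m *\<^sub>R u"
      using hermitian_eigenvector_in_invariant_subspace[OF herm] orth \<open>w \<noteq> 0\<close> S_def by blast
    then have "u \<notin> E" by (auto simp: S_def cinner_self)
    moreover have "eigenbasis (insert u E)"
      using E u by (auto simp: eigenbasis_def corthonormal_def S_def cinner_self cinner_commute[of u])
    ultimately show False using maximal[of "insert u E"] E by (simp add: eigenbasis_def)
  qed
  then show thesis using E that by (auto simp: eigenbasis_def)
qed

theorem hermitian_unitarily_diagonalizable: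
  fixes A :: "'n::finite cmat"
  assumes herm: "cadj A = A"
  obtains V r where "unitary_mat V" "A = diag_conj V r"
proof -
  obtain E where E: "finite E" "corthonormal E" "\<And>e. e \<in> E \<Longrightarrow> \<exists>m::real. A *v e = m *\<^sub>R e"
    and complete: "\<And>w. \<forall>e\<in>E. cinner e w = 0 \<Longrightarrow> w = 0"
    using hermitian_complete_eigenvectors[OF herm] by blast
  then obtain b where b: "bij_betw b (UNIV::'n set) E"
    using corthonormal_complete_card[OF E(1,2) complete] finite_same_card_bij[of "UNIV::'n set" E] by auto
  define V :: "'n cmat" where "V = (\<chi> i j. b j $ i)"
  have unitary: "unitary_mat V"
    unfolding V_def using b E(2) by (rule unitary_mat_of_corthonormal_columns)
  have "\<exists>m::real. A *v b j = m *\<^sub>R b j" for j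
    using E(3) b by (auto simp: bij_betw_def)
  then obtain r :: "'n \<Rightarrow> real" where r: "\<And>j. A *v b j = r j *\<^sub>R b j" by metis
  have "A ** V = V ** diag_mat r"
  proof -
    have "(A ** V) $ i $ j = (A *v b j) $ i" for i j
      by (simp add: matrix_matrix_mult_def matrix_vector_mult_def V_def)
    moreover have "(V ** diag_mat r) $ i $ j = b j $ i * complex_of_real (r j)" for i j
    proof -
      have "\<And>k. V $ i $ k * diag_mat r $ k $ j = (if k = j then b j $ i * complex_of_real (r j) else 0)"
        by (simp add: V_def diag_mat_def)
      then show ?thesis by (simp add: matrix_matrix_mult_def)
    qed
    ultimately show ?thesis by (simp add: vec_eq_iff r scaleR_eq_vector_scale mult.commute)
  qed
  then have "A = diag_conj V r"
    using unitary by (metis matrix_mul_assoc matrix_mul_rid unitary_mat_def)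
  then show thesis using that unitary by blast
qed

section \<open>Projectors\<close>

lemma projector_diag_conj_indicator:
  assumes "projector P"
  obtains W S where "unitary_mat W" "P = diag_conj W (indicator S)"
proof -
  obtain W r where W: "unitary_mat W" "P = diag_conj W r"
    using hermitian_unitarily_diagonalizable assms by (metis projector_def)
  then have "diag_conj W (\<lambda>j. r j * r j) = diag_conj W r"
    using assms by (simp add: diag_conj_mult projector_def)
  then have "r j * r j = r j" for j
    using diag_conj_inject[OF W(1)] by metis
  then have "r = indicator {j. r j = 1}"
    by (auto simp: indicator_def fun_eq_iff)
  then show thesis using that W by metis
qed

lemma trace_diag_conj_indicator:
  "unitary_mat W \<Longrightarrow> Re (trace (diag_conj W (indicator S))) = real (card S)"
  by (simp add: trace_diag_conj indicator_def sum.If_cases)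

lemma projector_trace_nat:
  assumes "projector P"
  shows "\<exists>t::nat. Re (trace P) = real t"
  using projector_diag_conj_indicator[OF assms] trace_diag_conj_indicator by metis

lemma obtain_bij_vimage_eq:
  fixes S T :: "'n::finite set"
  assumes "card S = card T"
  obtains s where "bij s" "s -` T = S"
proof -
  obtain f where f: "bij_betw f S T"
    using finite_same_card_bij[of S T] assms by auto
  have "card (- S) = card (- T)"
    using assms by (simp add: Compl_eq_Diff_UNIV card_Diff_subset)
  then obtain h where h: "bij_betw h (- S) (- T)"
    using finite_same_card_bij[of "- S" "- T"] by auto
  define s where "s j = (if j \<in> S then f j else h j)" for j
  have "bij_betw s S T"
    using f by (rule bij_betw_cong[THEN iffD1, rotated]) (simp add: s_def)
  moreover have "bij_betw s (- S) (- T)"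
    using h by (rule bij_betw_cong[THEN iffD1, rotated]) (simp add: s_def)
  ultimately have "bij_betw s (S \<union> - S) (T \<union> - T)"
    by (rule bij_betw_combine) auto
  moreover have "s j \<in> T \<longleftrightarrow> j \<in> S" for j
    using f h by (cases "j \<in> S") (auto simp: s_def bij_betw_def)
  then have "s -` T = S" by auto
  ultimately show thesis using that by (simp add: bij_def bij_betw_def)
qed

lemma projector_diag_conj_indicator_card:
  fixes P :: "'n::finite cmat"
  assumes "projector P" and "Re (trace P) = real (card T)"
  obtains W where "unitary_mat W" "P = diag_conj W (indicator T)"
proof -
  obtain W S where W: "unitary_mat W" "P = diag_conj W (indicator S)"
    using projector_diag_conj_indicator[OF assms(1)] by blast
  then have "card T = card S"
    using assms(2) trace_diag_conj_indicator[OF W(1), of S] by simp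
  then obtain s where s: "bij s" "s -` S = T"
    by (rule obtain_bij_vimage_eq)
  obtain W' where "unitary_mat W'" "diag_conj W (indicator S) = diag_conj W' (indicator S \<circ> s)"
    using diag_conj_permute[OF W(1) s(1)] by blast
  moreover have "indicator S \<circ> s = indicator T"
    using s(2) by (auto simp: indicator_def fun_eq_iff)
  ultimately show thesis using that W by metis
qed

lemma rank_1_idempotent_trace:
  fixes P :: "'n::finite cmat"
  assumes idem: "P ** P = P" and rank: "rank P = 1"
  shows "trace P = 1"
proof -
  obtain B where B: "B \<subseteq> rows P" "vec.independent B" "rows P \<subseteq> vec.span B" "card B = vec.dim (rows P)"
    using vec.basis_exists by blast
  then obtain u where u: "B = {u}"
    using rank by (auto simp: row_rank_def_gen card_1_singleton_iff)
  have "u \<noteq> 0" using B(2) u vec.dependent_zero by blast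
  then obtain j0 where j0: "u $ j0 \<noteq> 0" by (metis vec_eq_iff zero_index)
  have "\<exists>c. row i P = c *s u" for i
  proof -
    have "row i P \<in> vec.span {u}" using B(3) u by (auto simp: rows_def)
    then show ?thesis by (auto simp: vec.span_singleton)
  qed
  then obtain c where c: "\<And>i. row i P = c i *s u" by metis
  have entry: "P $ i $ j = c i * u $ j" for i j
    using arg_cong[OF c[of i], of "\<lambda>v. v $ j"] by (simp add: row_def)
  obtain i0 where "u = row i0 P" using B(1) u by (auto simp: rows_def)
  then have "c i0 * u $ j0 = u $ j0"
    using arg_cong[OF c[of i0], of "\<lambda>v. v $ j0"] by simp
  then have "c i0 = 1" using j0 by simp
  have "(\<Sum>k\<in>UNIV. u $ k * c k) * u $ j0 = (\<Sum>k\<in>UNIV. c k * (u $ k * u $ j0))"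
    by (simp only: sum_distrib_right) (simp add: mult_ac)
  also have "\<dots> = (P ** P) $ i0 $ j0"
    by (simp add: matrix_matrix_mult_def entry \<open>c i0 = 1\<close> mult_ac)
  also have "\<dots> = u $ j0"
    using idem by (simp add: entry \<open>c i0 = 1\<close>)
  finally have "(\<Sum>k\<in>UNIV. u $ k * c k) = 1" using j0 by simp
  then show ?thesis by (simp add: trace_def entry mult.commute)
qed

section \<open>Circuits and the closure \<open>M_infty\<close>\<close>

lemma circuit_complexity_le_length:
  assumes "set Us \<subseteq> G"
  shows "circuit_complexity G (circuit_prod Us) \<le> enat (length Us)"
proof -
  have "(LEAST r. \<exists>Vs. length Vs = r \<and> set Vs \<subseteq> G \<and> circuit_prod Vs = circuit_prod Us) \<le> length Us"
    by (rule Least_le) (use assms in blast)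
  then show ?thesis
    using assms by (auto simp: circuit_complexity_def)
qed

lemma unitary_conj_in_M_infty:
  fixes G :: "'n::finite cmat set"
  assumes "universal_gate_set G" and "P \<in> PP" and "unitary_mat U"
  shows "cadj U ** P ** U \<in> M_infty G PP"
proof -
  obtain X where X: "\<And>n. X n \<in> {circuit_prod Us | Us. set Us \<subseteq> G}" and "X \<longlonglongrightarrow> U"
    using assms(1,3) unfolding universal_gate_set_def closure_sequential by blast
  have "cadj (X n) ** P ** X n \<in> (\<Union>r. M_r G PP r)" for n
  proof -
    obtain Us where Us: "set Us \<subseteq> G" "X n = circuit_prod Us" using X[of n] by blast
    then have "circuit_complexity G (X n) \<le> enat (length Us)"
      using circuit_complexity_le_length by metis
    then have "cadj (X n) ** P ** X n \<in> M_r G PP (length Us)"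
      using assms(2) by (auto simp: M_r_def)
    then show ?thesis by blast
  qed
  moreover have "(\<lambda>n. cadj (X n) ** P ** X n) \<longlonglongrightarrow> cadj U ** P ** U"
  proof -
    have entry: "(\<lambda>n. X n $ a $ b) \<longlonglongrightarrow> U $ a $ b" for a b
      using \<open>X \<longlonglongrightarrow> U\<close> by (intro tendsto_vec_nth)
    show ?thesis
      by (rule vec_tendstoI)+
        (simp add: matrix_matrix_mult_def cadj_def, intro tendsto_sum tendsto_mult tendsto_const tendsto_cnj entry)
  qed
  ultimately show ?thesis
    unfolding M_infty_def closure_sequential by (intro exI[of _ "\<lambda>n. cadj (X n) ** P ** X n"]) blast
qed

lemma diag_projector_in_M_infty:
  fixes G :: "'n::finite cmat set"
  assumes "universal_gate_set G" "\<forall>P\<in>PP. projector P"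
    and "P \<in> PP" "Re (trace P) = real (card S)" "unitary_mat V"
  shows "diag_conj V (indicator S) \<in> M_infty G PP"
proof -
  obtain W where W: "unitary_mat W" "P = diag_conj W (indicator S)"
    using projector_diag_conj_indicator_card assms(2-4) by blast
  have "unitary_mat (W ** cadj V)"
    by (intro unitary_mat_matrix_mult unitary_mat_cadj W(1) assms(5))
  then show ?thesis
    using unitary_conj_in_M_infty[OF assms(1,3)] W
    by (metis cadj_mult_diag_conj_mult[OF W(1) assms(5)])
qed

section \<open>Traces bracketing a given dimension\<close>

lemma interval_length_le_Sup_gaps:
  fixes a b L :: real and X :: "real set"
  assumes "0 \<le> a" "a \<le> b" "b \<le> L" and gap: "\<And>x. x \<in> X \<Longrightarrow> x \<le> a \<or> b \<le> x"
  shows "b - a \<le> Sup {b - a | a b. {a<..<b} \<subseteq> {0..L} - X}"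
proof (rule cSup_upper)
  have "{a<..<b} \<subseteq> {0..L} - X"
    using assms by force
  then show "b - a \<in> {b - a | a b. {a<..<b} \<subseteq> {0..L} - X}" by blast
  show "bdd_above {b - a | a b. {a<..<b} \<subseteq> {0..L} - X}"
  proof (rule bdd_aboveI)
    fix y assume "y \<in> {b - a | a b. {a<..<b} \<subseteq> {0..L} - X}"
    then obtain a' b' where "y = b' - a'" "{a'<..<b'} \<subseteq> {0..L}" by blast
    then show "y \<le> L"
      using closure_mono[of "{a'<..<b'}" "{0..L}"] \<open>0 \<le> a\<close> \<open>a \<le> b\<close> \<open>b \<le> L\<close>
      by (cases "a' < b'") auto
  qed
qed

lemma obtain_adjacent_bracket:
  fixes T :: "nat set"
  assumes "t \<in> T" "t \<le> k" "t' \<in> T" "k \<le> t'"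
  obtains t1 t2 where "t1 \<in> T" "t2 \<in> T" "t \<le> t1" "t1 \<le> k" "k \<le> t2" "t2 \<le> t'"
    "\<And>s. s \<in> T \<Longrightarrow> s \<le> t1 \<or> t2 \<le> s"
proof
  have "finite {s \<in> T. s \<le> k}" "{s \<in> T. s \<le> k} \<noteq> {}"
    using assms(1,2) by auto
  then have "Max {s \<in> T. s \<le> k} \<in> {s \<in> T. s \<le> k}"
    by (rule Max_in)
  then show "Max {s \<in> T. s \<le> k} \<in> T" "Max {s \<in> T. s \<le> k} \<le> k"
    by auto
  show "t \<le> Max {s \<in> T. s \<le> k}"
    using assms(1,2) by (intro Max_ge) auto
  show "(LEAST s. s \<in> T \<and> k \<le> s) \<in> T" "k \<le> (LEAST s. s \<in> T \<and> k \<le> s)"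
    "(LEAST s. s \<in> T \<and> k \<le> s) \<le> t'"
    using LeastI[of "\<lambda>s. s \<in> T \<and> k \<le> s" t'] Least_le[of "\<lambda>s. s \<in> T \<and> k \<le> s" t'] assms(3,4)
    by auto
  fix s assume "s \<in> T"
  then show "s \<le> Max {s \<in> T. s \<le> k} \<or> (LEAST s. s \<in> T \<and> k \<le> s) \<le> s"
    by (cases "s \<le> k") (simp_all add: Least_le)
qed

lemma obtain_nested_subsets_with_card:
  fixes K :: "'n::finite set"
  assumes "t1 \<le> card K" "card K \<le> t2" "t2 \<le> CARD('n)"
  obtains S1 S2 where "S1 \<subseteq> K" "K \<subseteq> S2" "card S1 = t1" "card S2 = t2"
proof -
  obtain S1 where "S1 \<subseteq> K" "card S1 = t1"
    using obtain_subset_with_card_n[OF assms(1)] by blast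
  moreover have "t2 - card K \<le> card (- K)"
    using assms(3) by (simp add: Compl_eq_Diff_UNIV card_Diff_subset)
  then obtain R where "R \<subseteq> - K" "card R = t2 - card K"
    by (rule obtain_subset_with_card_n)
  then have "card (K \<union> R) = t2"
    using assms(2) card_Un_disjoint[of K R] by auto
  ultimately show thesis
    using that[of S1 "K \<union> R"] by simp
qed

lemma projector_traces_bracket:
  fixes PP :: "'n::finite cmat set"
  assumes "\<forall>P\<in>PP. projector P" "mat 1 \<in> PP" "\<exists>P\<in>PP. rank P = 1" "1 \<le> k" "k \<le> CARD('n)"
  obtains P1 P2 t1 t2 where "P1 \<in> PP" "Re (trace P1) = real t1" "P2 \<in> PP" "Re (trace P2) = real t2"
    "1 \<le> t1" "t1 \<le> k" "k \<le> t2" "t2 \<le> CARD('n)"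
    "ln (real t2) - ln (real t1)
       \<le> Sup {b - a | a b. {a<..<b} \<subseteq> {0..ln (real CARD('n))} - {ln (Re (trace P)) | P. P \<in> PP}}"
proof -
  define T where "T = {t::nat. \<exists>P\<in>PP. Re (trace P) = real t}"
  have one: "1 \<in> T"
  proof -
    obtain P where "P \<in> PP" "rank P = 1" using assms(3) by blast
    moreover have "P ** P = P" using assms(1) \<open>P \<in> PP\<close> by (simp add: projector_def)
    ultimately show ?thesis
      using rank_1_idempotent_trace by (force simp: T_def)
  qed
  have dim: "CARD('n) \<in> T"
    using assms(2) by (auto simp: T_def trace_I intro!: bexI[of _ "mat 1"])
  obtain t1 t2 where t: "t1 \<in> T" "t2 \<in> T" "1 \<le> t1" "t1 \<le> k" "k \<le> t2" "t2 \<le> CARD('n)"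
    and adjacent: "\<And>s. s \<in> T \<Longrightarrow> s \<le> t1 \<or> t2 \<le> s"
    using obtain_adjacent_bracket[OF one assms(4) dim assms(5)] by blast
  text \<open>Traces of projectors are natural numbers; a vanishing trace contributes ln 0 = 0 \<le> ln t1.\<close>
  have "x \<le> ln (real t1) \<or> ln (real t2) \<le> x" if x: "x \<in> {ln (Re (trace P)) | P. P \<in> PP}" for x
  proof -
    obtain P where "P \<in> PP" "x = ln (Re (trace P))" using x by blast
    moreover obtain s where "Re (trace P) = real s"
      using projector_trace_nat assms(1) \<open>P \<in> PP\<close> by blast
    ultimately have "s \<in> T" "x = ln (real s)" by (auto simp: T_def)
    show ?thesis
    proof (cases "s = 0")
      case True
      then show ?thesis using \<open>x = ln (real s)\<close> t(3) by simp
    next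
      case False
      have "0 < t2" using t(3-5) by linarith
      then show ?thesis using False adjacent[OF \<open>s \<in> T\<close>] \<open>x = ln (real s)\<close> t(3) by auto
    qed
  qed
  then have "ln (real t2) - ln (real t1)
      \<le> Sup {b - a | a b. {a<..<b} \<subseteq> {0..ln (real CARD('n))} - {ln (Re (trace P)) | P. P \<in> PP}}"
    using t(3-6) by (intro interval_length_le_Sup_gaps) simp_all
  moreover obtain P1 P2 where "P1 \<in> PP" "Re (trace P1) = real t1" "P2 \<in> PP" "Re (trace P2) = real t2"
    using t(1,2) by (auto simp: T_def)
  ultimately show thesis
    using that t(3-6) by blast
qed

section \<open>Quasi-universality\<close>

lemma povm_effect_diagonalizable:
  fixes Q :: "'n::finite cmat"
  assumes "povm_effect Q"
  obtains V r where "unitary_mat V" "Q = diag_conj V r" "\<And>j. 0 \<le> r j" "\<And>j. r j \<le> 1"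
proof -
  have "psd Q" "psd (mat 1 - Q)"
    using assms by (auto simp: povm_effect_def loewner_le_def)
  obtain V r where V: "unitary_mat V" "Q = diag_conj V r"
    using hermitian_unitarily_diagonalizable[OF psd_imp_hermitian[OF \<open>psd Q\<close>]] by blast
  have "mat 1 - Q = diag_conj V (\<lambda>j. 1 - r j)"
    using V by (simp flip: diag_conj_one diag_conj_diff)
  then show thesis
    using that V \<open>psd Q\<close> \<open>psd (mat 1 - Q)\<close> by (simp add: psd_diag_conj_iff)
qed

lemma diag_effect_sandwich:
  assumes "unitary_mat V" "\<And>j. 0 \<le> r j" "\<And>j. r j \<le> 1"
    and "S1 \<subseteq> {j. g < r j}" "{j. g < r j} \<subseteq> S2"
  shows "loewner_le (g *\<^sub>R diag_conj V (indicator S1)) (diag_conj V r)"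
    and "loewner_le (diag_conj V r) ((1 - g) *\<^sub>R diag_conj V (indicator S2) + g *\<^sub>R mat 1)"
proof -
  have "g * indicator S1 j \<le> r j" for j
    using assms(2,4) by (cases "j \<in> S1") auto
  then show "loewner_le (g *\<^sub>R diag_conj V (indicator S1)) (diag_conj V r)"
    using assms(1) by (simp add: scaleR_diag_conj loewner_le_diag_conj)
  have "r j \<le> (1 - g) * indicator S2 j + g * 1" for j
  proof (cases "j \<in> S2")
    case False
    then have "\<not> g < r j" using assms(5) by blast
    then show ?thesis using False by simp
  qed (use assms(3) in simp)
  then show "loewner_le (diag_conj V r) ((1 - g) *\<^sub>R diag_conj V (indicator S2) + g *\<^sub>R mat 1)"
    using assms(1) by (simp add: scaleR_diag_conj loewner_le_diag_conj diag_conj_add flip: diag_conj_one)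
qed

lemma diag_conj_op_norm_1_eigenvalue_gt:
  assumes "unitary_mat V" "op_norm (diag_conj V r) = 1" "\<And>j. 0 \<le> r j" "g < 1"
  shows "{j. g < r j} \<noteq> {}"
proof
  assume "{j. g < r j} = {}"
  then have "\<bar>r j\<bar> \<le> g" for j
    using assms(3)[of j] by (auto simp: not_less)
  then have "op_norm (diag_conj V r) \<le> g"
    by (rule op_norm_diag_conj_le[OF assms(1)])
  then show False using assms(2,4) by simp
qed

theorem propositionI4:
  fixes G :: "('n::finite) cmat set" and PP :: "'n cmat set"
  assumes "mat 1 \<in> G" and "\<forall>U\<in>G. unitary_mat U" and "universal_gate_set G"
    and "\<forall>P\<in>PP. projector P" and "mat 1 \<in> PP" and "\<exists>P\<in>PP. rank P = 1"
  defines "q \<equiv> Sup {b - a | a b. {a<..<b} \<subseteq> {0..ln (real CARD('n))} - {ln (Re (trace P)) | P. P \<in> PP}}"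
  shows "quasiuniversal (M_infty G PP) q (mat 1)"
  unfolding quasiuniversal_def
proof (intro allI impI)
  fix Q :: "'n cmat" and g :: real
  assume "povm_effect Q \<and> op_norm Q = 1 \<and> 0 < g \<and> g < 1"
  then have Q: "povm_effect Q" "op_norm Q = 1" and g: "g < 1" by auto
  obtain V r where V: "unitary_mat V" "Q = diag_conj V r" and r: "\<And>j. 0 \<le> r j" "\<And>j. r j \<le> 1"
    using povm_effect_diagonalizable[OF Q(1)] by blast
  define K where "K = {j. g < r j}"
  have "K \<noteq> {}"
    using diag_conj_op_norm_1_eigenvalue_gt[OF V(1) _ r(1) g] Q(2) V(2) by (simp add: K_def)
  then have k: "1 \<le> card K" "card K \<le> CARD('n)"
    by (simp_all add: Suc_le_eq card_gt_0_iff card_mono)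
  obtain P1 P2 t1 t2 where P: "P1 \<in> PP" "Re (trace P1) = real t1" "P2 \<in> PP" "Re (trace P2) = real t2"
    and t: "1 \<le> t1" "t1 \<le> card K" "card K \<le> t2" "t2 \<le> CARD('n)" and gap: "ln (real t2) - ln (real t1) \<le> q"
    by (rule projector_traces_bracket[OF assms(4-6) k, folded q_def]) (rule that)
  obtain S1 S2 where S: "S1 \<subseteq> K" "K \<subseteq> S2" "card S1 = t1" "card S2 = t2"
    using obtain_nested_subsets_with_card[OF t(2-4)] by blast
  define Qt Qt' where "Qt = diag_conj V (indicator S1)" and "Qt' = diag_conj V (indicator S2)"
  have "Qt \<in> M_infty G PP"
    unfolding Qt_def using P(2) S(3) by (intro diag_projector_in_M_infty[OF assms(3,4) P(1) _ V(1)]) simp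
  moreover have "Qt' \<in> M_infty G PP"
    unfolding Qt'_def using P(4) S(4) by (intro diag_projector_in_M_infty[OF assms(3,4) P(3) _ V(1)]) simp
  moreover have "loewner_le (g *\<^sub>R Qt) Q" "loewner_le Q ((1 - g) *\<^sub>R Qt' + g *\<^sub>R mat 1)"
    using S(1,2) unfolding V(2) Qt_def Qt'_def K_def by (rule diag_effect_sandwich[OF V(1) r])+
  moreover have "Re (trace (Qt ** mat 1)) = real t1" "Re (trace (Qt' ** mat 1)) = real t2"
    using trace_diag_conj_indicator[OF V(1)] S(3,4) by (simp_all add: Qt_def Qt'_def)
  ultimately show "\<exists>Qt Qt'. Qt \<in> M_infty G PP \<and> Qt' \<in> M_infty G PP \<and>
           loewner_le (g *\<^sub>R Qt) Q \<and> loewner_le Q ((1 - g) *\<^sub>R Qt' + g *\<^sub>R mat 1) \<and>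
           0 < Re (trace (Qt ** mat 1)) \<and> 0 < Re (trace (Qt' ** mat 1)) \<and>
           ln (Re (trace (Qt' ** mat 1))) - ln (Re (trace (Qt ** mat 1))) \<le> q"
    using t gap by (intro exI[of _ Qt] exI[of _ Qt']) simp
qed

end
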